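(* Let $(\mathcal M,[g],\nabla)$ be a three-dimensional Weyl structure with $[g]$ of Euclidean (positive definite) signature, with non-closed Weyl 1-form $\nu$ (i.e. ${\rm d}\nu\neq 0$), which is Einstein-Weyl and has reduced holonomy. Then the Weyl structure is flat.
   Context: A Weyl structure on a real $n$-manifold $\mathcal M$ consists of a conformal class $[g]$ of metrics of signature $(p,q)$ and a torsion-free connection $\nabla$ such that for each representative $g\in[g]$ there is a 1-form $\nu$ with $\nabla g=-2\nu\otimes g$; under $g\to e^{2\phi}g$ one has $\nu\to\nu-{\rm d}\phi$, so ${\rm d}\nu$ is independent of the representative. The structure is equivalently a torsion-free connection on the $CO(p,q)$-bundle of conformal frames, where $CO(p,q)=\mathbb R_+\times O(p,q)$ with Lie algebra $\mathfrak{co}(p,q)=\mathbb R\oplus\mathfrak{o}(p,q)$. In an orthonormal coframe $(\theta^i)$ of a representative $g=g_{ij}\theta^i\theta^j$ ($g_{ij}$ constant), the connection 1-forms $\Gamma^i{}_j$ are determined by ${\rm d}\theta^i+\Gamma^i{}_j\wedge\theta^j=0$ and $\Gamma_{(ij)}=g_{ij}\nu$ with $\Gamma_{ij}=g_{ik}\Gamma^k{}_j$. The structure has reduced holonomy if its (local) holonomy group is a proper subgroup of $CO(p,q)$, i.e. locally the connection can be reduced so that $(\Gamma^i{}_j)$ takes values in a proper subalgebra of $\mathfrak{co}(p,q)$. The curvature is $\Omega^i{}_j={\rm d}\Gamma^i{}_j+\Gamma^i{}_k\wedge\Gamma^k{}_j=\tfrac12\Omega^i{}_{jkl}\theta^k\wedge\theta^l$,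 the Ricci tensor ${\rm Ric}_{ij}=\Omega^k{}_{ikj}$, the Ricci scalar $R={\rm Ric}_{ij}g^{ij}$. The structure is Einstein-Weyl if ${\rm Ric}_{(ij)}-\tfrac1n R\,g_{ij}=0$, and flat if $\Omega=0$. *)

theory Defs
  imports "HOL-Analysis.Analysis"
begin

text \<open>Local model: a Weyl structure on an open set U of R^3 (coordinates x^a, a :: 3).
  The conformal class is given by a representative g = sum_i theta^i theta^i, where the
  orthonormal coframe is theta^i = sum_a e x $ i $ a dx^a (Euclidean signature, g_ij = delta_ij).
  The Weyl 1-form is nu = sum_a nu x $ a dx^a; connection 1-forms
  Gamma^i_j = sum_a Gamma x a $ i $ j dx^a.\<close>

definition kd :: "3 \<Rightarrow> 3 \<Rightarrow> real" where
  "kd i j = (if i = j then 1 else 0)"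

definition pd :: "3 \<Rightarrow> (real^3 \<Rightarrow> real) \<Rightarrow> real^3 \<Rightarrow> real" where
  "pd a f x = frechet_derivative f (at x) (axis a 1)"

fun ipd :: "3 list \<Rightarrow> (real^3 \<Rightarrow> real) \<Rightarrow> real^3 \<Rightarrow> real" where
  "ipd [] f = f"
| "ipd (a # ds) f = pd a (ipd ds f)"

definition smooth_on :: "(real^3) set \<Rightarrow> (real^3 \<Rightarrow> real) \<Rightarrow> bool" where
  "smooth_on U f \<longleftrightarrow> (\<forall>ds. ipd ds f differentiable_on U)"

text \<open>co(3) = R + o(3) and CO(3) = R_+ x O(3) as matrices.\<close>
definition co3 :: "(real^3^3) set" where
  "co3 = {M. \<exists>c. \<forall>i j. M $ i $ j + M $ j $ i = 2 * c * kd i j}"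

definition CO3 :: "(real^3^3) set" where
  "CO3 = {M. \<exists>l>0. \<exists>R. orthogonal_matrix R \<and> M = l *\<^sub>R R}"

definition lie_subalgebra :: "(real^3^3) set \<Rightarrow> bool" where
  "lie_subalgebra h \<longleftrightarrow> subspace h \<and> (\<forall>X\<in>h. \<forall>Y\<in>h. X ** Y - Y ** X \<in> h)"

text \<open>Torsion-free Weyl connection forms: d theta^i + Gamma^i_j /\ theta^j = 0 and
  Gamma_(ij) = g_ij nu.\<close>
definition weyl_connection ::
  "(real^3) set \<Rightarrow> (real^3 \<Rightarrow> real^3^3) \<Rightarrow> (real^3 \<Rightarrow> real^3) \<Rightarrow> (real^3 \<Rightarrow> 3 \<Rightarrow> real^3^3) \<Rightarrow> bool" where
  "weyl_connection U e \<nu> \<Gamma> \<longleftrightarrow> (\<forall>x\<in>U.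
     (\<forall>i a b. pd a (\<lambda>y. e y $ i $ b) x - pd b (\<lambda>y. e y $ i $ a) x
        + (\<Sum>j\<in>UNIV. \<Gamma> x a $ i $ j * e x $ j $ b - \<Gamma> x b $ i $ j * e x $ j $ a) = 0) \<and>
     (\<forall>a i j. (\<Gamma> x a $ i $ j + \<Gamma> x a $ j $ i) / 2 = kd i j * \<nu> x $ a))"

text \<open>Curvature 2-form Omega^i_j = d Gamma^i_j + Gamma^i_k /\ Gamma^k_j, coordinate components
  (Omega^i_j = 1/2 sum_ab curv .. a b dx^a /\ dx^b).\<close>
definition curv :: "(real^3 \<Rightarrow> 3 \<Rightarrow> real^3^3) \<Rightarrow> real^3 \<Rightarrow> 3 \<Rightarrow> 3 \<Rightarrow> 3 \<Rightarrow> 3 \<Rightarrow> real" where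
  "curv \<Gamma> x i j a b = pd a (\<lambda>y. \<Gamma> y b $ i $ j) x - pd b (\<lambda>y. \<Gamma> y a $ i $ j) x
     + (\<Sum>k\<in>UNIV. \<Gamma> x a $ i $ k * \<Gamma> x b $ k $ j - \<Gamma> x b $ i $ k * \<Gamma> x a $ k $ j)"

text \<open>Frame components Omega^i_{jkl} (dx^a = sum_k (e^{-1}) $ a $ k theta^k).\<close>
definition curvF :: "(real^3 \<Rightarrow> real^3^3) \<Rightarrow> (real^3 \<Rightarrow> 3 \<Rightarrow> real^3^3) \<Rightarrow> real^3 \<Rightarrow> 3 \<Rightarrow> 3 \<Rightarrow> 3 \<Rightarrow> 3 \<Rightarrow> real" where
  "curvF e \<Gamma> x i j k l = (\<Sum>a\<in>UNIV. \<Sum>b\<in>UNIV.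
      curv \<Gamma> x i j a b * matrix_inv (e x) $ a $ k * matrix_inv (e x) $ b $ l)"

definition ricci :: "(real^3 \<Rightarrow> real^3^3) \<Rightarrow> (real^3 \<Rightarrow> 3 \<Rightarrow> real^3^3) \<Rightarrow> real^3 \<Rightarrow> 3 \<Rightarrow> 3 \<Rightarrow> real" where
  "ricci e \<Gamma> x i j = (\<Sum>k\<in>UNIV. curvF e \<Gamma> x k i k j)"

definition scal :: "(real^3 \<Rightarrow> real^3^3) \<Rightarrow> (real^3 \<Rightarrow> 3 \<Rightarrow> real^3^3) \<Rightarrow> real^3 \<Rightarrow> real" where
  "scal e \<Gamma> x = (\<Sum>i\<in>UNIV. ricci e \<Gamma> x i i)"

definition einstein_weyl :: "(real^3) set \<Rightarrow> (real^3 \<Rightarrow> real^3^3) \<Rightarrow> (real^3 \<Rightarrow> 3 \<Rightarrow> real^3^3) \<Rightarrow> bool" where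
  "einstein_weyl U e \<Gamma> \<longleftrightarrow> (\<forall>x\<in>U. \<forall>i j.
     (ricci e \<Gamma> x i j + ricci e \<Gamma> x j i) / 2 - scal e \<Gamma> x / 3 * kd i j = 0)"

definition flat_on :: "(real^3) set \<Rightarrow> (real^3 \<Rightarrow> 3 \<Rightarrow> real^3^3) \<Rightarrow> bool" where
  "flat_on U \<Gamma> \<longleftrightarrow> (\<forall>x\<in>U. \<forall>i j a b. curv \<Gamma> x i j a b = 0)"

definition reduced_on :: "(real^3) set \<Rightarrow> (real^3 \<Rightarrow> 3 \<Rightarrow> real^3^3) \<Rightarrow> bool" where
  "reduced_on V \<Gamma> \<longleftrightarrow> (\<exists>h A. lie_subalgebra h \<and> h \<subseteq> co3 \<and> h \<noteq> co3 \<and>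
     (\<forall>i j. smooth_on V (\<lambda>x. A x $ i $ j)) \<and>
     (\<forall>x\<in>V. A x \<in> CO3 \<and>
        (\<forall>a. matrix_inv (A x) ** \<Gamma> x a ** A x
              + matrix_inv (A x) ** (\<chi> i j. pd a (\<lambda>y. A y $ i $ j) x) \<in> h)))"

definition reduced_holonomy :: "(real^3) set \<Rightarrow> (real^3 \<Rightarrow> 3 \<Rightarrow> real^3^3) \<Rightarrow> bool" where
  "reduced_holonomy U \<Gamma> \<longleftrightarrow> (\<forall>p\<in>U. \<exists>V. open V \<and> p \<in> V \<and> V \<subseteq> U \<and> reduced_on V \<Gamma>)"

definition dform_nonzero_at :: "(real^3 \<Rightarrow> real^3) \<Rightarrow> real^3 \<Rightarrow> bool" where
  "dform_nonzero_at \<nu> x \<longleftrightarrow> (\<exists>a b. pd a (\<lambda>y. \<nu> y $ b) x - pd b (\<lambda>y. \<nu> y $ a) x \<noteq> 0)"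

end

theory Submission
  imports Defs
begin

text \<open>Fix a point p. Gauge covariance of curvature puts all curvature matrices at p into a
  conjugate S of the holonomy algebra, a proper Lie subalgebra of co(3) = R Id + o(3). As
  o(3) = (R^3, cross product) has no proper non-abelian subalgebra, either no frame component
  Omega_kl has a scale part, or they all commute. In the commuting case the Einstein-Weyl
  equations force the o(3)-parts to vanish, so Omega = F Id, and the first Bianchi identity
  F \<and> theta^i = 0 gives F = 0. Either way tr Omega = 3 d nu vanishes at p, contradicting
  d nu \<noteq> 0. So the hypotheses hold at no point, and flatness follows vacuously, in line with
  the fact that a flat Weyl structure has d nu = tr Omega / 3 = 0.\<close>

section \<open>Partial derivatives\<close>

lemma pd_has_derivative:
  assumes "(f has_derivative F) (at x)"
  shows "pd a f x = F (axis a 1)"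
  using frechet_derivative_at[OF assms] by (simp add: pd_def)

lemma pd_add:
  assumes "f differentiable (at x)" "g differentiable (at x)"
  shows "pd a (\<lambda>y. f y + g y) x = pd a f x + pd a g x"
  using pd_has_derivative[OF has_derivative_add[OF assms[unfolded frechet_derivative_works]]]
  by (simp add: pd_def)

lemma pd_diff:
  assumes "f differentiable (at x)" "g differentiable (at x)"
  shows "pd a (\<lambda>y. f y - g y) x = pd a f x - pd a g x"
  using pd_has_derivative[OF has_derivative_diff[OF assms[unfolded frechet_derivative_works]]]
  by (simp add: pd_def)

lemma pd_mult:
  assumes "f differentiable (at x)" "g differentiable (at x)"
  shows "pd a (\<lambda>y. f y * g y) x = pd a f x * g x + f x * pd a g x"
  using pd_has_derivative[OF has_derivative_mult[OF assms[unfolded frechet_derivative_works]]]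
  by (simp add: pd_def mult.commute)

lemma pd_sum:
  assumes "\<And>i. i \<in> I \<Longrightarrow> f i differentiable (at x)"
  shows "pd a (\<lambda>y. \<Sum>i\<in>I. f i y) x = (\<Sum>i\<in>I. pd a (f i) x)"
proof -
  have "((\<lambda>y. \<Sum>i\<in>I. f i y) has_derivative (\<lambda>h. \<Sum>i\<in>I. frechet_derivative (f i) (at x) h)) (at x)"
    using assms by (intro has_derivative_sum) (simp add: frechet_derivative_works[symmetric])
  from pd_has_derivative[OF this] show ?thesis by (simp add: pd_def)
qed

lemma pd_const: "pd a (\<lambda>y. c) x = 0"
  using pd_has_derivative[OF has_derivative_const] by simp

lemma pd_cong_open:
  assumes "open S" "x \<in> S" "\<And>y. y \<in> S \<Longrightarrow> f y = g y"
  shows "pd a f x = pd a g x"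
proof -
  have "(f has_derivative F) (at x) \<longleftrightarrow> (g has_derivative F) (at x)" for F
    using has_derivative_transform_within_open[OF _ assms(1,2), where f=f and f'=F and g=g and t=UNIV]
      has_derivative_transform_within_open[OF _ assms(1,2), where f=g and f'=F and g=f and t=UNIV]
      assms(3)
    by auto
  then show ?thesis by (simp add: pd_def frechet_derivative_def)
qed

lemma differentiable_cong_open:
  assumes "open S" "x \<in> S" "\<And>y. y \<in> S \<Longrightarrow> f y = g y" "f differentiable (at x)"
  shows "g differentiable (at x)"
  using assms has_derivative_transform_within_open unfolding differentiable_def by metis

lemma ipd_append: "ipd (ds @ [a]) f = ipd ds (pd a f)"
  by (induction ds) auto

lemma smooth_on_pd: "smooth_on U f \<Longrightarrow> smooth_on U (pd a f)"
  unfolding smooth_on_def by (metis ipd_append)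

lemma smooth_on_differentiable_at:
  "smooth_on U f \<Longrightarrow> open U \<Longrightarrow> x \<in> U \<Longrightarrow> f differentiable (at x)"
  unfolding smooth_on_def by (metis differentiable_on_eq_differentiable_at ipd.simps(1))

lemma smooth_on_subset: "smooth_on U f \<Longrightarrow> V \<subseteq> U \<Longrightarrow> smooth_on V f"
  unfolding smooth_on_def using differentiable_on_subset by blast

lemma has_real_derivative_along_line:
  fixes f :: "real^3 \<Rightarrow> real"
  assumes "f differentiable (at (z + t *\<^sub>R w))"
  shows "((\<lambda>s. f (z + s *\<^sub>R w)) has_real_derivative frechet_derivative f (at (z + t *\<^sub>R w)) w) (at t)"
proof -
  let ?F = "frechet_derivative f (at (z + t *\<^sub>R w))"
  have line: "((\<lambda>s. z + s *\<^sub>R w) has_derivative (\<lambda>s. s *\<^sub>R w)) (at t)"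
    by (auto intro!: derivative_eq_intros)
  have f: "(f has_derivative ?F) (at ((\<lambda>s. z + s *\<^sub>R w) t))"
    using assms frechet_derivative_works by blast
  have "(?F \<circ> (\<lambda>s. s *\<^sub>R w)) = (\<lambda>s. ?F w * s)"
    using linear_scale[OF has_derivative_linear[OF f]] by (auto simp: o_def mult.commute)
  with diff_chain_at[OF line f] show ?thesis
    by (simp add: has_field_derivative_def o_def)
qed

lemma second_difference_mean_value:
  fixes f :: "real^3 \<Rightarrow> real"
  assumes h: "h > 0"
    and in_V: "\<And>s t. 0 \<le> s \<Longrightarrow> s \<le> h \<Longrightarrow> 0 \<le> t \<Longrightarrow> t \<le> h \<Longrightarrow>
                 x + s *\<^sub>R axis a 1 + t *\<^sub>R axis b 1 \<in> V"
    and df: "\<forall>y\<in>V. f differentiable at y"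
    and ddf: "\<forall>y\<in>V. pd a f differentiable at y"
  shows "\<exists>s t. 0 \<le> s \<and> s \<le> h \<and> 0 \<le> t \<and> t \<le> h \<and>
     f (x + h *\<^sub>R axis a 1 + h *\<^sub>R axis b 1) - f (x + h *\<^sub>R axis a 1) - f (x + h *\<^sub>R axis b 1) + f x
       = h^2 * pd b (pd a f) (x + s *\<^sub>R axis a 1 + t *\<^sub>R axis b 1)"
proof -
  define u where "u = (axis a 1 :: real^3)"
  define v where "v = (axis b 1 :: real^3)"
  define \<phi> where "\<phi> s = f ((x + h *\<^sub>R v) + s *\<^sub>R u) - f (x + s *\<^sub>R u)" for s
  have "\<exists>s1. 0 < s1 \<and> s1 < h \<and>
      \<phi> h - \<phi> 0 = (h - 0) * (pd a f ((x + h *\<^sub>R v) + s1 *\<^sub>R u) - pd a f (x + s1 *\<^sub>R u))"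
  proof (rule MVT2[OF h])
    fix s assume s: "0 \<le> s" "s \<le> h"
    have "(x + h *\<^sub>R v) + s *\<^sub>R u \<in> V" "x + s *\<^sub>R u \<in> V"
      using in_V[OF s, of h] in_V[OF s, of 0] h by (simp_all add: u_def v_def algebra_simps)
    then show "DERIV \<phi> s :> pd a f ((x + h *\<^sub>R v) + s *\<^sub>R u) - pd a f (x + s *\<^sub>R u)"
      unfolding \<phi>_def using df has_real_derivative_along_line
      by (auto intro!: DERIV_diff simp: pd_def u_def)
  qed
  then obtain s1 where s1: "0 < s1" "s1 < h"
    and \<phi>_eq: "\<phi> h - \<phi> 0 = h * (pd a f ((x + s1 *\<^sub>R u) + h *\<^sub>R v) - pd a f ((x + s1 *\<^sub>R u) + 0 *\<^sub>R v))"
    by (auto simp: algebra_simps)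
  define \<psi> where "\<psi> t = pd a f ((x + s1 *\<^sub>R u) + t *\<^sub>R v)" for t
  have "\<exists>t1. 0 < t1 \<and> t1 < h \<and> \<psi> h - \<psi> 0 = (h - 0) * pd b (pd a f) ((x + s1 *\<^sub>R u) + t1 *\<^sub>R v)"
  proof (rule MVT2[OF h])
    fix t assume t: "0 \<le> t" "t \<le> h"
    have "(x + s1 *\<^sub>R u) + t *\<^sub>R v \<in> V"
      using in_V[of s1 t] s1 t by (simp add: u_def v_def algebra_simps)
    then show "DERIV \<psi> t :> pd b (pd a f) ((x + s1 *\<^sub>R u) + t *\<^sub>R v)"
      unfolding \<psi>_def using has_real_derivative_along_line[of "pd a f" "x + s1 *\<^sub>R u" t v] ddf
      by (simp add: pd_def v_def)
  qed
  then obtain t1 where t1: "0 < t1" "t1 < h"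
    and \<psi>_eq: "\<psi> h - \<psi> 0 = h * pd b (pd a f) ((x + s1 *\<^sub>R u) + t1 *\<^sub>R v)" by auto
  have "f (x + h *\<^sub>R u + h *\<^sub>R v) - f (x + h *\<^sub>R u) - f (x + h *\<^sub>R v) + f x = \<phi> h - \<phi> 0"
    by (simp add: \<phi>_def algebra_simps)
  also have "\<dots> = h * (\<psi> h - \<psi> 0)" using \<phi>_eq by (simp add: \<psi>_def)
  also have "\<dots> = h^2 * pd b (pd a f) (x + s1 *\<^sub>R u + t1 *\<^sub>R v)"
    using \<psi>_eq by (simp add: power2_eq_square)
  finally show ?thesis using s1 t1 unfolding u_def v_def
    by (intro exI[of _ s1] exI[of _ t1]) auto
qed

lemma pd_pd_commute:
  fixes f :: "real^3 \<Rightarrow> real"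
  assumes V: "open V" "x \<in> V"
    and df: "\<forall>y\<in>V. f differentiable at y"
    and da: "\<forall>y\<in>V. pd a f differentiable at y"
    and db: "\<forall>y\<in>V. pd b f differentiable at y"
    and cab: "continuous (at x) (pd b (pd a f))"
    and cba: "continuous (at x) (pd a (pd b f))"
  shows "pd b (pd a f) x = pd a (pd b f) x"
proof -
  obtain r where r: "r > 0" "ball x r \<subseteq> V" using V openE by blast
  have close: "\<bar>pd b (pd a f) x - pd a (pd b f) x\<bar> < 2 * \<epsilon>" if "\<epsilon> > 0" for \<epsilon>
  proof -
    obtain d1 where d1: "d1 > 0"
      "\<And>y. dist y x < d1 \<Longrightarrow> dist (pd b (pd a f) y) (pd b (pd a f) x) < \<epsilon>"
      using cab \<open>\<epsilon> > 0\<close> unfolding continuous_at_eps_delta by blast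
    obtain d2 where d2: "d2 > 0"
      "\<And>y. dist y x < d2 \<Longrightarrow> dist (pd a (pd b f) y) (pd a (pd b f) x) < \<epsilon>"
      using cba \<open>\<epsilon> > 0\<close> unfolding continuous_at_eps_delta by blast
    define h where "h = min r (min d1 d2) / 3"
    have h: "h > 0" using r d1 d2 by (simp add: h_def)
    have near: "dist (x + s *\<^sub>R axis c 1 + t *\<^sub>R axis d 1) x < min r (min d1 d2)"
      if "0 \<le> s" "s \<le> h" "0 \<le> t" "t \<le> h" for s t and c d :: 3
    proof -
      have "dist (x + s *\<^sub>R axis c 1 + t *\<^sub>R axis d 1) x \<le> norm (s *\<^sub>R axis c (1::real)) + norm (t *\<^sub>R axis d (1::real))"
        using norm_triangle_ineq[of "s *\<^sub>R axis c (1::real)" "t *\<^sub>R axis d (1::real)"]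
        by (simp add: dist_norm)
      also have "\<dots> = s + t" using that by simp
      finally show ?thesis using that h unfolding h_def by linarith
    qed
    have in_V: "x + s *\<^sub>R axis c 1 + t *\<^sub>R axis d 1 \<in> V"
      if "0 \<le> s" "s \<le> h" "0 \<le> t" "t \<le> h" for s t and c d :: 3
      using near[OF that, of c d] r(2) by (auto simp: dist_commute)
    obtain s t where st: "0 \<le> s" "s \<le> h" "0 \<le> t" "t \<le> h"
      and E1: "f (x + h *\<^sub>R axis a 1 + h *\<^sub>R axis b 1) - f (x + h *\<^sub>R axis a 1) - f (x + h *\<^sub>R axis b 1) + f x
       = h^2 * pd b (pd a f) (x + s *\<^sub>R axis a 1 + t *\<^sub>R axis b 1)"
      using second_difference_mean_value[OF h in_V df da] by blast
    obtain s' t' where st': "0 \<le> s'" "s' \<le> h" "0 \<le> t'" "t' \<le> h"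
      and E2: "f (x + h *\<^sub>R axis b 1 + h *\<^sub>R axis a 1) - f (x + h *\<^sub>R axis b 1) - f (x + h *\<^sub>R axis a 1) + f x
       = h^2 * pd a (pd b f) (x + s' *\<^sub>R axis b 1 + t' *\<^sub>R axis a 1)"
      using second_difference_mean_value[OF h in_V df db] by blast
    have eq: "pd b (pd a f) (x + s *\<^sub>R axis a 1 + t *\<^sub>R axis b 1)
        = pd a (pd b f) (x + s' *\<^sub>R axis b 1 + t' *\<^sub>R axis a 1)"
      using E1 E2 h by (simp add: algebra_simps)
    have "dist (pd b (pd a f) (x + s *\<^sub>R axis a 1 + t *\<^sub>R axis b 1)) (pd b (pd a f) x) < \<epsilon>"
      using d1(2) near[OF st, of a b] by simp
    moreover have "dist (pd a (pd b f) (x + s' *\<^sub>R axis b 1 + t' *\<^sub>R axis a 1)) (pd a (pd b f) x) < \<epsilon>"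
      using d2(2) near[OF st', of b a] by simp
    ultimately show ?thesis using eq by (simp add: dist_real_def)
  qed
  show ?thesis
  proof (rule ccontr)
    assume "pd b (pd a f) x \<noteq> pd a (pd b f) x"
    then have "\<bar>pd b (pd a f) x - pd a (pd b f) x\<bar> > 0" by simp
    with close[of "\<bar>pd b (pd a f) x - pd a (pd b f) x\<bar> / 4"] show False by simp
  qed
qed

lemma smooth_on_pd_commute:
  assumes "smooth_on V f" "open V" "x \<in> V"
  shows "pd b (pd a f) x = pd a (pd b f) x"
  using assms smooth_on_differentiable_at smooth_on_pd differentiable_imp_continuous_within
  by (intro pd_pd_commute[OF assms(2,3)]) blast+

section \<open>Matrices and matrix-valued functions\<close>

lemma matrix_eq_iff: "(M::'a^'n^'m) = N \<longleftrightarrow> (\<forall>i j. M $ i $ j = N $ i $ j)"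
  by (simp add: vec_eq_iff)

lemma mat_entry: "(mat c :: 'a::zero^'n^'n) $ i $ j = (if i = j then c else 0)"
  by (simp add: mat_def)

lemma matrix_diff_ldistrib: "(A::'a::ring_1^'n^'m) ** (B - C) = A ** B - A ** C"
  by (simp add: matrix_matrix_mult_def vec_eq_iff sum_subtractf[symmetric] algebra_simps)

lemma matrix_add_rdistrib: "((B::'a::semiring_1^'n^'m) + C) ** A = B ** A + C ** A"
  by (simp add: matrix_matrix_mult_def vec_eq_iff sum.distrib[symmetric] algebra_simps)

lemma matrix_diff_rdistrib: "((B::'a::ring_1^'n^'m) - C) ** A = B ** A - C ** A"
  by (simp add: matrix_matrix_mult_def vec_eq_iff sum_subtractf[symmetric] algebra_simps)

lemma invertible_matrix_inv:
  assumes "invertible (A::'a::semiring_1^'n^'m)"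
  shows "A ** matrix_inv A = mat 1" "matrix_inv A ** A = mat 1"
proof -
  have "A ** matrix_inv A = mat 1 \<and> matrix_inv A ** A = mat 1"
    using assms unfolding invertible_def matrix_inv_def by (rule someI_ex)
  then show "A ** matrix_inv A = mat 1" "matrix_inv A ** A = mat 1" by auto
qed

lemma matrix_inv_eqI:
  fixes A B :: "'a::field^'n^'n"
  assumes "B ** A = mat 1"
  shows "matrix_inv A = B"
proof -
  have "invertible A" using assms invertible_left_inverse by blast
  then have "B = B ** (A ** matrix_inv A)" by (simp add: invertible_matrix_inv)
  also have "\<dots> = matrix_inv A" by (simp add: matrix_mul_assoc assms)
  finally show ?thesis by simp
qed

definition matrix_pd :: "3 \<Rightarrow> (real^3 \<Rightarrow> real^'n^'m) \<Rightarrow> real^3 \<Rightarrow> real^'n^'m" where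
  "matrix_pd a F x = (\<chi> i j. pd a (\<lambda>y. F y $ i $ j) x)"

definition entrywise_differentiable :: "(real^3 \<Rightarrow> real^'n^'m) \<Rightarrow> real^3 \<Rightarrow> bool" where
  "entrywise_differentiable F x \<longleftrightarrow> (\<forall>i j. (\<lambda>y. F y $ i $ j) differentiable (at x))"

lemma entrywise_differentiable_add:
  "entrywise_differentiable F x \<Longrightarrow> entrywise_differentiable G x \<Longrightarrow>
    entrywise_differentiable (\<lambda>y. F y + G y) x"
  unfolding entrywise_differentiable_def by (auto intro!: differentiable_add)

lemma entrywise_differentiable_mult:
  "entrywise_differentiable F x \<Longrightarrow> entrywise_differentiable G x \<Longrightarrow>
    entrywise_differentiable (\<lambda>y. F y ** G y) x"
  unfolding entrywise_differentiable_def matrix_matrix_mult_def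
  by (auto intro!: differentiable_sum differentiable_mult)

lemma entrywise_differentiable_cong_open:
  assumes "open S" "x \<in> S" "\<And>y. y \<in> S \<Longrightarrow> F y = G y" "entrywise_differentiable F x"
  shows "entrywise_differentiable G x"
  unfolding entrywise_differentiable_def
proof (intro allI)
  fix i j
  show "(\<lambda>y. G y $ i $ j) differentiable (at x)"
    by (rule differentiable_cong_open[OF assms(1,2), of "\<lambda>y. F y $ i $ j"])
      (use assms(3,4) in \<open>auto simp: entrywise_differentiable_def\<close>)
qed

lemma smooth_entrywise_differentiable:
  assumes "\<forall>i j. smooth_on V (\<lambda>x. F x $ i $ j)" "open V" "p \<in> V"
  shows "entrywise_differentiable F p" "entrywise_differentiable (matrix_pd a F) p"
proof -
  have "smooth_on V (\<lambda>x. F x $ i $ j)" "smooth_on V (pd a (\<lambda>x. F x $ i $ j))" for i j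
    using assms(1) smooth_on_pd by auto
  then show "entrywise_differentiable F p" "entrywise_differentiable (matrix_pd a F) p"
    using smooth_on_differentiable_at[OF _ assms(2,3)]
    by (auto simp: entrywise_differentiable_def matrix_pd_def)
qed

lemma matrix_pd_cong_open:
  assumes "open S" "x \<in> S" "\<And>y. y \<in> S \<Longrightarrow> F y = G y"
  shows "matrix_pd a F x = matrix_pd a G x"
proof -
  have "pd a (\<lambda>y. F y $ i $ j) x = pd a (\<lambda>y. G y $ i $ j) x" for i j
    using assms(3) by (intro pd_cong_open[OF assms(1,2)]) simp
  then show ?thesis by (simp add: matrix_pd_def)
qed

lemma matrix_pd_diff:
  assumes "entrywise_differentiable F x" "entrywise_differentiable G x"
  shows "matrix_pd a (\<lambda>y. F y - G y) x = matrix_pd a F x - matrix_pd a G x"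
proof -
  have "pd a (\<lambda>y. F y $ i $ j - G y $ i $ j) x = pd a (\<lambda>y. F y $ i $ j) x - pd a (\<lambda>y. G y $ i $ j) x"
    for i j
    using assms unfolding entrywise_differentiable_def by (intro pd_diff) auto
  then show ?thesis by (simp add: matrix_pd_def vec_eq_iff)
qed

lemma matrix_pd_mult:
  assumes F: "entrywise_differentiable F x" and G: "entrywise_differentiable G x"
  shows "matrix_pd a (\<lambda>y. F y ** G y) x = matrix_pd a F x ** G x + F x ** matrix_pd a G x"
proof -
  have "pd a (\<lambda>y. \<Sum>k\<in>UNIV. F y $ i $ k * G y $ k $ j) x
      = (\<Sum>k\<in>UNIV. pd a (\<lambda>y. F y $ i $ k * G y $ k $ j) x)" for i j
    using F G unfolding entrywise_differentiable_def by (intro pd_sum) (auto intro!: differentiable_mult)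
  also have "\<dots> i j = (\<Sum>k\<in>UNIV. pd a (\<lambda>y. F y $ i $ k) x * G x $ k $ j
                                + F x $ i $ k * pd a (\<lambda>y. G y $ k $ j) x)" for i j
    using F G unfolding entrywise_differentiable_def by (intro sum.cong refl pd_mult) auto
  finally show ?thesis
    by (simp add: matrix_pd_def matrix_matrix_mult_def vec_eq_iff sum.distrib)
qed

lemma smooth_matrix_pd_commute:
  assumes "\<forall>i j. smooth_on V (\<lambda>x. F x $ i $ j)" "open V" "p \<in> V"
  shows "matrix_pd a (matrix_pd b F) p = matrix_pd b (matrix_pd a F) p"
  using smooth_on_pd_commute[OF _ assms(2,3)] assms(1) by (simp add: matrix_pd_def vec_eq_iff)

text \<open>Every element of the orthogonal complement of h annihilates F, hence also its derivative.\<close>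
lemma matrix_pd_in_subspace:
  assumes h: "subspace h" and V: "open V" "x \<in> V"
    and F_h: "\<And>y. y \<in> V \<Longrightarrow> F y \<in> h" and F: "entrywise_differentiable F x"
  shows "matrix_pd a F x \<in> h"
proof -
  have "N \<bullet> matrix_pd a F x = 0" if N: "N \<in> orthogonal_comp h" for N
  proof -
    define \<phi> where "\<phi> y = (\<Sum>i\<in>UNIV. \<Sum>j\<in>UNIV. N $ i $ j * F y $ i $ j)" for y
    have "\<phi> y = 0" if "y \<in> V" for y
    proof -
      have "F y \<bullet> N = 0" using N F_h[OF that] by (auto simp: orthogonal_comp_def orthogonal_def)
      then show ?thesis by (simp add: \<phi>_def inner_vec_def mult.commute)
    qed
    then have "pd a \<phi> x = pd a (\<lambda>y. 0) x" by (intro pd_cong_open[OF V]) auto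
    then have "pd a \<phi> x = 0" by (simp add: pd_const)
    moreover have "pd a \<phi> x = (\<Sum>i\<in>UNIV. pd a (\<lambda>y. \<Sum>j\<in>UNIV. N $ i $ j * F y $ i $ j) x)"
      using F unfolding \<phi>_def entrywise_differentiable_def
      by (intro pd_sum) (auto intro!: differentiable_sum differentiable_mult)
    moreover have "\<dots> = (\<Sum>i\<in>UNIV. \<Sum>j\<in>UNIV. pd a (\<lambda>y. N $ i $ j * F y $ i $ j) x)"
      using F unfolding entrywise_differentiable_def
      by (intro sum.cong refl pd_sum) (auto intro!: differentiable_mult)
    moreover have "pd a (\<lambda>y. N $ i $ j * F y $ i $ j) x = N $ i $ j * pd a (\<lambda>y. F y $ i $ j) x" for i j
      using F unfolding entrywise_differentiable_def by (simp add: pd_mult pd_const)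
    ultimately show ?thesis by (simp add: inner_vec_def matrix_pd_def)
  qed
  then have "matrix_pd a F x \<in> orthogonal_comp (orthogonal_comp h)"
    by (auto simp: orthogonal_comp_def orthogonal_def)
  then show ?thesis using orthogonal_comp_self[OF h] by simp
qed

section \<open>Conformal matrices and gauge covariance of curvature\<close>

text \<open>For A = l R in CO(3), with R orthogonal, this is l^2, read off from the first column.\<close>
definition conformal_scale_sq :: "real^3^3 \<Rightarrow> real" where
  "conformal_scale_sq A = (\<Sum>k\<in>UNIV. (A $ k $ 1)^2)"

lemma CO3_conformal_scale_sq:
  assumes "A \<in> CO3"
  shows "conformal_scale_sq A > 0" "transpose A ** A = conformal_scale_sq A *\<^sub>R mat 1"
proof -
  obtain l R where lR: "l > 0" "orthogonal_matrix R" "A = l *\<^sub>R R"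
    using assms unfolding CO3_def by blast
  have "transpose R ** R = mat 1" using lR(2) orthogonal_matrix by blast
  then have AA: "transpose A ** A = l^2 *\<^sub>R mat 1"
    by (simp add: lR(3) transpose_scalar matrix_scalar_ac scalar_matrix_assoc[symmetric] power2_eq_square)
  have "conformal_scale_sq A = (transpose A ** A) $ 1 $ 1"
    by (simp add: conformal_scale_sq_def matrix_matrix_mult_def transpose_def power2_eq_square)
  then have "conformal_scale_sq A = l^2" using AA by (simp add: mat_def)
  with lR(1) AA show "conformal_scale_sq A > 0" "transpose A ** A = conformal_scale_sq A *\<^sub>R mat 1"
    by simp_all
qed

lemma CO3_left_inverse:
  "A \<in> CO3 \<Longrightarrow> ((1 / conformal_scale_sq A) *\<^sub>R transpose A) ** A = mat 1"
  using CO3_conformal_scale_sq[of A] by (simp add: scalar_matrix_assoc[symmetric])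

lemma CO3_matrix_inv: "A \<in> CO3 \<Longrightarrow> matrix_inv A = (1 / conformal_scale_sq A) *\<^sub>R transpose A"
  by (rule matrix_inv_eqI[OF CO3_left_inverse])

lemma CO3_invertible: "A \<in> CO3 \<Longrightarrow> invertible A"
  using CO3_left_inverse invertible_left_inverse by blast

lemma entrywise_differentiable_matrix_inv_CO3:
  assumes V: "open V" "p \<in> V" and A_CO3: "\<forall>y\<in>V. A y \<in> CO3"
    and A: "entrywise_differentiable A p"
  shows "entrywise_differentiable (\<lambda>y. matrix_inv (A y)) p"
proof (rule entrywise_differentiable_cong_open[OF V])
  show "(1 / conformal_scale_sq (A y)) *\<^sub>R transpose (A y) = matrix_inv (A y)" if "y \<in> V" for y
    using CO3_matrix_inv A_CO3 that by simp
  have nonzero: "conformal_scale_sq (A p) \<noteq> 0"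
    using CO3_conformal_scale_sq(1)[of "A p"] A_CO3 V by simp
  have scale: "(\<lambda>y. conformal_scale_sq (A y)) differentiable (at p)"
    using A unfolding conformal_scale_sq_def entrywise_differentiable_def
    by (auto intro!: differentiable_sum differentiable_power)
  show "entrywise_differentiable (\<lambda>y. (1 / conformal_scale_sq (A y)) *\<^sub>R transpose (A y)) p"
    unfolding entrywise_differentiable_def
  proof (intro allI)
    fix i j
    have "(\<lambda>y. A y $ j $ i / conformal_scale_sq (A y)) differentiable (at p)"
      using A nonzero scale unfolding entrywise_differentiable_def by (auto intro!: differentiable_divide)
    then show "(\<lambda>y. ((1 / conformal_scale_sq (A y)) *\<^sub>R transpose (A y)) $ i $ j) differentiable (at p)"
      by (simp add: transpose_def)
  qed
qed

definition curv_mat :: "(real^3 \<Rightarrow> 3 \<Rightarrow> real^3^3) \<Rightarrow> real^3 \<Rightarrow> 3 \<Rightarrow> 3 \<Rightarrow> real^3^3" where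
  "curv_mat \<Gamma> x a b = (\<chi> i j. curv \<Gamma> x i j a b)"

lemma curv_mat_eq:
  "curv_mat \<Gamma> x a b = matrix_pd a (\<lambda>y. \<Gamma> y b) x - matrix_pd b (\<lambda>y. \<Gamma> y a) x
     + \<Gamma> x a ** \<Gamma> x b - \<Gamma> x b ** \<Gamma> x a"
  by (simp add: curv_mat_def curv_def matrix_pd_def matrix_matrix_mult_def vec_eq_iff sum_subtractf)

text \<open>The algebra behind the gauge covariance of curvature. Here a1 and b1 stand for the
  partial derivatives of the gauge A0, and the third hypothesis is the symmetry of its second
  derivatives once these are expanded by the gauge equation dA = A Q - G A.\<close>
lemma gauge_curvature_identity:
  fixes A0 Ga Gb Qa Qb dQab dQba dGab dGba a1 b1 :: "'a::ring_1^'n^'n"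
  assumes "a1 = A0 ** Qa - Ga ** A0" and "b1 = A0 ** Qb - Gb ** A0"
    and "a1 ** Qb + A0 ** dQab - (dGab ** A0 + Gb ** a1) = b1 ** Qa + A0 ** dQba - (dGba ** A0 + Ga ** b1)"
  shows "A0 ** (dQab - dQba + Qa ** Qb - Qb ** Qa) = (dGab - dGba + Ga ** Gb - Gb ** Ga) ** A0"
proof -
  note distrib = matrix_add_ldistrib matrix_diff_ldistrib matrix_add_rdistrib matrix_diff_rdistrib
    matrix_mul_assoc
  have "A0 ** (dQab - dQba + Qa ** Qb - Qb ** Qa) - (dGab - dGba + Ga ** Gb - Gb ** Ga) ** A0
      = a1 ** Qb + A0 ** dQab - (dGab ** A0 + Gb ** a1) - (b1 ** Qa + A0 ** dQba - (dGba ** A0 + Ga ** b1))"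
    unfolding assms(1,2) by (simp add: distrib algebra_simps)
  then show ?thesis using assms(3) by simp
qed

lemma matrix_pd_gauge_equation:
  fixes A Q G :: "real^3 \<Rightarrow> real^'n^'n"
  assumes V: "open V" "p \<in> V"
    and gauge: "\<And>y. y \<in> V \<Longrightarrow> matrix_pd b A y = A y ** Q y - G y ** A y"
    and dA: "entrywise_differentiable A p" and dQ: "entrywise_differentiable Q p"
    and dG: "entrywise_differentiable G p"
  shows "matrix_pd a (matrix_pd b A) p
    = matrix_pd a A p ** Q p + A p ** matrix_pd a Q p - (matrix_pd a G p ** A p + G p ** matrix_pd a A p)"
proof -
  have "matrix_pd a (matrix_pd b A) p = matrix_pd a (\<lambda>y. A y ** Q y - G y ** A y) p"
    using gauge by (intro matrix_pd_cong_open[OF V]) auto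
  also have "\<dots> = matrix_pd a (\<lambda>y. A y ** Q y) p - matrix_pd a (\<lambda>y. G y ** A y) p"
    by (intro matrix_pd_diff entrywise_differentiable_mult dA dQ dG)
  finally show ?thesis
    using matrix_pd_mult[OF dA dQ] matrix_pd_mult[OF dG dA] by simp
qed

text \<open>M below is the curvature of the gauged connection Q, so it lies in h with Q.\<close>
lemma curv_mat_gauge:
  fixes \<Gamma> :: "real^3 \<Rightarrow> 3 \<Rightarrow> real^3^3" and A :: "real^3 \<Rightarrow> real^3^3"
  assumes V: "open V" "p \<in> V"
    and \<Gamma>_smooth: "\<forall>a i j. smooth_on V (\<lambda>x. \<Gamma> x a $ i $ j)"
    and A_smooth: "\<forall>i j. smooth_on V (\<lambda>x. A x $ i $ j)"
    and A_CO3: "\<forall>x\<in>V. A x \<in> CO3"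
    and h: "lie_subalgebra h"
    and gauged_in_h: "\<forall>x\<in>V. \<forall>a. matrix_inv (A x) ** \<Gamma> x a ** A x + matrix_inv (A x) ** matrix_pd a A x \<in> h"
  shows "\<exists>M\<in>h. A p ** M = curv_mat \<Gamma> p a b ** A p"
proof -
  define Q where "Q a y = matrix_inv (A y) ** \<Gamma> y a ** A y + matrix_inv (A y) ** matrix_pd a A y" for a y
  have h_subspace: "subspace h" and h_bracket: "\<forall>X\<in>h. \<forall>Y\<in>h. X ** Y - Y ** X \<in> h"
    using h unfolding lie_subalgebra_def by auto
  have Q_h: "Q a y \<in> h" if "y \<in> V" for a y
    using gauged_in_h that unfolding Q_def by blast
  note dA = smooth_entrywise_differentiable[OF A_smooth V]
  have d\<Gamma>: "entrywise_differentiable (\<lambda>y. \<Gamma> y a) p" for a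
    by (rule smooth_entrywise_differentiable(1)[OF _ V]) (use \<Gamma>_smooth in simp)
  have dQ: "entrywise_differentiable (Q a) p" for a
    unfolding Q_def
    by (intro entrywise_differentiable_add entrywise_differentiable_mult
        entrywise_differentiable_matrix_inv_CO3[OF V A_CO3] dA d\<Gamma>)
  have pd_A: "matrix_pd a A y = A y ** Q a y - \<Gamma> y a ** A y" if "y \<in> V" for a y
  proof -
    have "A y ** matrix_inv (A y) = mat 1"
      using invertible_matrix_inv(1)[OF CO3_invertible] A_CO3 that by blast
    then show ?thesis
      by (simp add: Q_def matrix_add_ldistrib matrix_mul_assoc)
  qed
  note pd_pd_A = matrix_pd_gauge_equation[OF V pd_A dA(1) dQ d\<Gamma>]
  define M where "M = matrix_pd a (Q b) p - matrix_pd b (Q a) p + Q a p ** Q b p - Q b p ** Q a p"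
  have "M \<in> h"
  proof -
    have "matrix_pd a (Q b) p \<in> h" "matrix_pd b (Q a) p \<in> h"
      using matrix_pd_in_subspace[OF h_subspace V Q_h dQ] by auto
    moreover have "Q a p ** Q b p - Q b p ** Q a p \<in> h" using h_bracket Q_h V by blast
    ultimately show ?thesis
      unfolding M_def using h_subspace
      by (metis add_diff_eq subspace_add subspace_diff)
  qed
  moreover have "A p ** M = curv_mat \<Gamma> p a b ** A p"
    unfolding M_def curv_mat_eq
  proof (rule gauge_curvature_identity)
    show "matrix_pd a A p = A p ** Q a p - \<Gamma> p a ** A p" "matrix_pd b A p = A p ** Q b p - \<Gamma> p b ** A p"
      using pd_A V by blast+
    show "matrix_pd a A p ** Q b p + A p ** matrix_pd a (Q b) p
          - (matrix_pd a (\<lambda>y. \<Gamma> y b) p ** A p + \<Gamma> p b ** matrix_pd a A p)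
        = matrix_pd b A p ** Q a p + A p ** matrix_pd b (Q a) p
          - (matrix_pd b (\<lambda>y. \<Gamma> y a) p ** A p + \<Gamma> p a ** matrix_pd b A p)"
      using pd_pd_A[of a b] pd_pd_A[of b a] smooth_matrix_pd_commute[OF A_smooth V, of a b] by simp
  qed
  ultimately show ?thesis by blast
qed

section \<open>Subalgebras of co(3)\<close>

definition proper_co3_subalgebra :: "(real^3^3) set \<Rightarrow> bool" where
  "proper_co3_subalgebra S \<longleftrightarrow> lie_subalgebra S \<and> S \<subseteq> co3 \<and> S \<noteq> co3"

definition hat :: "real^3 \<Rightarrow> real^3^3" where
  "hat w = vector [vector [0, -(w$3), w$2], vector [w$3, 0, -(w$1)], vector [-(w$2), w$1, 0]]"

definition axial :: "real^3^3 \<Rightarrow> real^3" where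
  "axial M = vector [M$3$2, M$1$3, M$2$1]"

lemma hat_entries:
  "hat w $ 1 $ 1 = 0" "hat w $ 1 $ 2 = -(w$3)" "hat w $ 1 $ 3 = w$2"
  "hat w $ 2 $ 1 = w$3" "hat w $ 2 $ 2 = 0" "hat w $ 2 $ 3 = -(w$1)"
  "hat w $ 3 $ 1 = -(w$2)" "hat w $ 3 $ 2 = w$1" "hat w $ 3 $ 3 = 0"
  by (simp_all add: hat_def)

lemma hat_add: "hat (u + v) = hat u + hat v"
  unfolding matrix_eq_iff forall_3 by (simp add: hat_entries)

lemma hat_scaleR: "hat (c *\<^sub>R u) = c *\<^sub>R hat u"
  unfolding matrix_eq_iff forall_3 by (simp add: hat_entries)

lemma hat_eq_0_iff: "hat u = 0 \<longleftrightarrow> u = 0"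
  unfolding matrix_eq_iff forall_3 by (auto simp: hat_entries vec_eq_iff forall_3)

lemma co3_entries:
  assumes "M \<in> co3"
  shows "M $ 2 $ 2 = M $ 1 $ 1" "M $ 3 $ 3 = M $ 1 $ 1" "M $ 2 $ 3 = - M $ 3 $ 2"
    "M $ 3 $ 1 = - M $ 1 $ 3" "M $ 1 $ 2 = - M $ 2 $ 1"
proof -
  obtain c where c: "\<forall>i j. M $ i $ j + M $ j $ i = 2 * c * kd i j"
    using assms unfolding co3_def by blast
  have diag: "M $ i $ i = c" for i using c[rule_format, of i i] by (simp add: kd_def)
  have off: "M $ i $ j = - M $ j $ i" if "i \<noteq> j" for i j
    using c[rule_format, of i j] that by (simp add: kd_def)
  show "M $ 2 $ 2 = M $ 1 $ 1" "M $ 3 $ 3 = M $ 1 $ 1" using diag by auto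
  show "M $ 2 $ 3 = - M $ 3 $ 2" "M $ 3 $ 1 = - M $ 1 $ 3" "M $ 1 $ 2 = - M $ 2 $ 1"
    using off[of 2 3] off[of 3 1] off[of 1 2] by simp_all
qed

lemma co3_decomp: "M \<in> co3 \<Longrightarrow> M = mat (M$1$1) + hat (axial M)"
  using co3_entries[of M] unfolding matrix_eq_iff forall_3
  by (simp add: hat_entries mat_entry axial_def)

lemma hat_bracket:
  "(mat c + hat u) ** (mat d + hat v) - (mat d + hat v) ** (mat c + hat u) = hat (cross3 u v)"
  unfolding matrix_eq_iff forall_3
  by (simp add: matrix_matrix_mult_def sum_3 hat_entries mat_entry cross3_simps)

lemma cross3_nonzero_if_orthogonal:
  fixes u n :: "real^3"
  assumes "u \<noteq> 0" "n \<noteq> 0" "u \<bullet> n = 0"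
  shows "cross3 u n \<noteq> 0"
proof -
  have "(norm (cross3 u n))\<^sup>2 = (norm u)\<^sup>2 * (norm n)\<^sup>2"
    using norm_cross[of u n] assms(3) by simp
  moreover have "(norm u)\<^sup>2 * (norm n)\<^sup>2 > 0" using assms(1,2) by simp
  ultimately show ?thesis by auto
qed

text \<open>A non-abelian subalgebra of o(3) is all of o(3): from [X, Y] = hat n with n \<noteq> 0 the
  brackets produce the orthogonal frame n, u \<times> n, n \<times> (u \<times> n).\<close>
lemma noncommuting_co3_subalgebra_contains_hat:
  assumes S: "lie_subalgebra S" "S \<subseteq> co3"
    and XY: "X \<in> S" "Y \<in> S" "X ** Y \<noteq> Y ** X"
  shows "hat w \<in> S"
proof -
  have S_subspace: "subspace S" and S_bracket: "\<forall>X\<in>S. \<forall>Y\<in>S. X ** Y - Y ** X \<in> S"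
    using S(1) unfolding lie_subalgebra_def by auto
  define u where "u = axial X"
  have X: "X = mat (X$1$1) + hat u" and Y: "Y = mat (Y$1$1) + hat (axial Y)"
    using co3_decomp XY S(2) unfolding u_def by blast+
  define n where "n = cross3 u (axial Y)"
  have "hat n = X ** Y - Y ** X"
    using hat_bracket[of "X$1$1" u "Y$1$1" "axial Y"] unfolding n_def
    by (simp only: X[symmetric] Y[symmetric])
  then have n_S: "hat n \<in> S" and n0: "n \<noteq> 0"
    using S_bracket XY hat_eq_0_iff[of n] by auto
  then have u0: "u \<noteq> 0" unfolding n_def by auto
  define m where "m = cross3 u n"
  have "hat m = X ** hat n - hat n ** X"
    using hat_bracket[of "X$1$1" u 0 n] unfolding m_def by (simp only: X[symmetric] mat_0 add_0)
  then have m_S: "hat m \<in> S" using S_bracket XY n_S by auto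
  define q where "q = cross3 n m"
  have "hat q = hat n ** hat m - hat m ** hat n"
    using hat_bracket[of 0 n 0 m] unfolding q_def by simp
  then have q_S: "hat q \<in> S" using S_bracket n_S m_S by auto
  have orth: "u \<bullet> n = 0" "n \<bullet> m = 0" "n \<bullet> q = 0" "m \<bullet> q = 0"
    unfolding q_def m_def n_def by (simp_all add: dot_cross_self)
  have m0: "m \<noteq> 0" unfolding m_def using cross3_nonzero_if_orthogonal u0 n0 orth(1) .
  have q0: "q \<noteq> 0" unfolding q_def using cross3_nonzero_if_orthogonal n0 m0 orth(2) .
  have subL: "subspace {w. hat w \<in> S}"
    using S_subspace unfolding subspace_def
    by (auto simp: hat_add hat_scaleR hat_eq_0_iff[of 0, simplified])
  have indep: "independent {n, m, q}"
    by (rule pairwise_orthogonal_independent)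
      (use orth n0 m0 q0 in \<open>auto simp: pairwise_def orthogonal_def inner_commute\<close>)
  have "n \<noteq> m" "n \<noteq> q" "m \<noteq> q" using orth(2-4) n0 m0 by auto
  then have "card {n, m, q} = 3" by simp
  then have "(UNIV :: (real^3) set) \<subseteq> span {n, m, q}"
    by (intro card_ge_dim_independent[OF _ indep]) simp_all
  also have "\<dots> \<subseteq> {w. hat w \<in> S}"
    by (rule span_minimal[OF _ subL]) (use n_S m_S q_S in simp)
  finally show ?thesis by auto
qed

text \<open>Z $ 1 $ 1 is the scale part of Z. If X and Y did not commute, S would contain o(3),
  and together with Z all of co(3).\<close>
lemma proper_co3_subalgebra_commute:
  assumes S: "proper_co3_subalgebra S"
    and Z: "Z \<in> S" "Z $ 1 $ 1 \<noteq> 0" and XY: "X \<in> S" "Y \<in> S"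
  shows "X ** Y = Y ** X"
proof (rule ccontr)
  assume "X ** Y \<noteq> Y ** X"
  then have hat_S: "hat w \<in> S" for w
    using noncommuting_co3_subalgebra_contains_hat XY S unfolding proper_co3_subalgebra_def by blast
  have S_subspace: "subspace S" and S_co3: "S \<subseteq> co3" "S \<noteq> co3"
    using S unfolding proper_co3_subalgebra_def lie_subalgebra_def by auto
  have co3_split: "M = (M$1$1) *\<^sub>R mat 1 + hat (axial M)" if "M \<in> co3" for M
  proof -
    have "mat (M$1$1) = (M$1$1) *\<^sub>R (mat 1 :: real^3^3)" by (simp add: vec_eq_iff mat_def)
    then show ?thesis using co3_decomp[OF that] by argo
  qed
  have "Z - hat (axial Z) \<in> S" using subspace_diff[OF S_subspace Z(1) hat_S] .
  moreover have "Z - hat (axial Z) = (Z$1$1) *\<^sub>R mat 1"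
    using co3_split[of Z] Z(1) S_co3(1) by (subst diff_eq_eq) blast
  ultimately have "(Z$1$1) *\<^sub>R mat 1 \<in> S" by simp
  then have "(1 / Z$1$1) *\<^sub>R ((Z$1$1) *\<^sub>R mat 1) \<in> S" by (rule subspace_scale[OF S_subspace])
  then have id_S: "mat 1 \<in> S" using Z(2) by simp
  have "M \<in> S" if "M \<in> co3" for M
    by (subst co3_split[OF that])
      (intro subspace_add[OF S_subspace] subspace_scale[OF S_subspace] id_S hat_S)
  then show False using S_co3 by blast
qed

lemma co3_iff_transpose: "M \<in> co3 \<longleftrightarrow> (\<exists>c. M + transpose M = (2 * c) *\<^sub>R mat 1)"
  unfolding co3_def by (simp add: vec_eq_iff transpose_def mat_def kd_def)

lemma CO3_conj_co3:
  assumes A: "A \<in> CO3" and M: "M \<in> co3"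
  shows "A ** M ** matrix_inv A \<in> co3"
proof -
  obtain c where c: "M + transpose M = (2 * c) *\<^sub>R mat 1" using M unfolding co3_iff_transpose by blast
  define s where "s = conformal_scale_sq A"
  have s0: "s \<noteq> 0" using CO3_conformal_scale_sq(1)[OF A] unfolding s_def by simp
  have inv: "matrix_inv A = (1 / s) *\<^sub>R transpose A" using CO3_matrix_inv[OF A] unfolding s_def .
  have "A ** transpose A = s *\<^sub>R (A ** matrix_inv A)"
    using s0 by (simp add: inv matrix_scalar_ac scalar_matrix_assoc[symmetric])
  then have AAt: "A ** transpose A = s *\<^sub>R mat 1"
    using invertible_matrix_inv(1)[OF CO3_invertible[OF A]] by simp
  have conj: "A ** M ** matrix_inv A = (1 / s) *\<^sub>R (A ** M ** transpose A)"
    by (simp add: inv matrix_scalar_ac scalar_matrix_assoc[symmetric])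
  have "transpose (A ** M ** matrix_inv A) = (1 / s) *\<^sub>R (A ** transpose M ** transpose A)"
    unfolding conj by (simp add: transpose_scalar matrix_transpose_mul matrix_mul_assoc)
  then have "A ** M ** matrix_inv A + transpose (A ** M ** matrix_inv A)
      = (1 / s) *\<^sub>R (A ** (M + transpose M) ** transpose A)"
    unfolding conj by (simp add: matrix_add_ldistrib matrix_add_rdistrib scaleR_add_right)
  also have "\<dots> = (2 * c) *\<^sub>R mat 1"
    using s0 by (simp add: c matrix_scalar_ac scalar_matrix_assoc[symmetric] AAt)
  finally show ?thesis unfolding co3_iff_transpose by blast
qed

lemma proper_co3_subalgebra_conj:
  fixes A :: "real^3^3"
  assumes A: "A \<in> CO3" and h: "proper_co3_subalgebra h"
  shows "proper_co3_subalgebra ((\<lambda>M. A ** M ** matrix_inv A) ` h)"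
proof -
  define B where "B = matrix_inv A"
  have BA: "B ** A = mat 1" and AB: "A ** B = mat 1"
    using invertible_matrix_inv[OF CO3_invertible[OF A]] unfolding B_def by auto
  have h_subspace: "subspace h" and h_bracket: "\<forall>X\<in>h. \<forall>Y\<in>h. X ** Y - Y ** X \<in> h"
    and h_co3: "h \<subseteq> co3" "h \<noteq> co3"
    using h unfolding proper_co3_subalgebra_def lie_subalgebra_def by auto
  let ?S = "(\<lambda>M. A ** M ** B) ` h"
  have lin: "linear (\<lambda>M. A ** M ** B)"
    by (rule linearI)
      (simp_all add: matrix_add_ldistrib matrix_add_rdistrib matrix_scalar_ac scalar_matrix_assoc)
  have conj_mult: "(A ** X ** B) ** (A ** Y ** B) = A ** (X ** Y) ** B" for X Y
  proof -
    have "(A ** X ** B) ** (A ** Y ** B) = A ** X ** (B ** A) ** Y ** B" by (simp add: matrix_mul_assoc)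
    then show ?thesis using BA by (simp add: matrix_mul_assoc)
  qed
  have conj_cancel: "B ** (A ** X ** B) ** A = X" for X
  proof -
    have "B ** (A ** X ** B) ** A = (B ** A) ** X ** (B ** A)" by (simp add: matrix_mul_assoc)
    then show ?thesis using BA by simp
  qed
  have bracket: "X ** Y - Y ** X \<in> ?S" if XY_S: "X \<in> ?S" "Y \<in> ?S" for X Y
  proof -
    obtain X' Y' where h': "X' \<in> h" "Y' \<in> h" and XY': "X = A ** X' ** B" "Y = A ** Y' ** B"
      using XY_S by blast
    have "X ** Y - Y ** X = A ** (X' ** Y' - Y' ** X') ** B"
      unfolding XY' conj_mult by (simp add: matrix_diff_ldistrib matrix_diff_rdistrib)
    moreover have "X' ** Y' - Y' ** X' \<in> h" using h_bracket h' by blast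
    ultimately show ?thesis by (rule image_eqI)
  qed
  have S_co3: "?S \<subseteq> co3" using CO3_conj_co3[OF A] h_co3(1) unfolding B_def by auto
  have S_proper: "?S \<noteq> co3"
  proof
    assume S_eq: "?S = co3"
    have "K \<in> h" if K_co3: "K \<in> co3" for K
    proof -
      have "A ** K ** B \<in> co3" using CO3_conj_co3[OF A K_co3] unfolding B_def .
      then have "A ** K ** B \<in> ?S" unfolding S_eq .
      then obtain M where "M \<in> h" "A ** K ** B = A ** M ** B" by blast
      then show ?thesis using conj_cancel[of K] conj_cancel[of M] by metis
    qed
    then show False using h_co3 by blast
  qed
  show ?thesis
    unfolding proper_co3_subalgebra_def lie_subalgebra_def B_def[symmetric]
    using linear_subspace_image[OF lin h_subspace] bracket S_co3 S_proper by blast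
qed

lemma reduced_on_curvature_in_proper_subalgebra:
  assumes V: "open V" "p \<in> V"
    and \<Gamma>_smooth: "\<forall>a i j. smooth_on V (\<lambda>x. \<Gamma> x a $ i $ j)"
    and "reduced_on V \<Gamma>"
  shows "\<exists>S. proper_co3_subalgebra S \<and> (\<forall>a b. curv_mat \<Gamma> p a b \<in> S)"
proof -
  obtain h A where h: "proper_co3_subalgebra h"
    and A_smooth: "\<forall>i j. smooth_on V (\<lambda>x. A x $ i $ j)"
    and A_CO3: "\<forall>x\<in>V. A x \<in> CO3"
    and gauged_in_h: "\<forall>x\<in>V. \<forall>a. matrix_inv (A x) ** \<Gamma> x a ** A x
          + matrix_inv (A x) ** matrix_pd a A x \<in> h"
    using assms(4) unfolding reduced_on_def proper_co3_subalgebra_def matrix_pd_def by blast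
  have Ap: "A p \<in> CO3" using A_CO3 V by blast
  have "curv_mat \<Gamma> p a b \<in> (\<lambda>M. A p ** M ** matrix_inv (A p)) ` h" for a b
  proof -
    obtain M where M: "M \<in> h" "A p ** M = curv_mat \<Gamma> p a b ** A p"
      using curv_mat_gauge[OF V \<Gamma>_smooth A_smooth A_CO3 _ gauged_in_h] h
      unfolding proper_co3_subalgebra_def by blast
    have "curv_mat \<Gamma> p a b = curv_mat \<Gamma> p a b ** A p ** matrix_inv (A p)"
      using invertible_matrix_inv(1)[OF CO3_invertible[OF Ap]] by (simp add: matrix_mul_assoc[symmetric])
    also have "\<dots> = A p ** M ** matrix_inv (A p)" using M(2) by simp
    finally show ?thesis using M(1) by blast
  qed
  then show ?thesis using proper_co3_subalgebra_conj[OF Ap h] by blast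
qed

section \<open>Curvature identities\<close>

definition torsion_free :: "(real^3) set \<Rightarrow> (real^3 \<Rightarrow> real^3^3) \<Rightarrow> (real^3 \<Rightarrow> 3 \<Rightarrow> real^3^3) \<Rightarrow> bool" where
  "torsion_free U e \<Gamma> \<longleftrightarrow> (\<forall>x\<in>U. \<forall>i a b. pd a (\<lambda>y. e y $ i $ b) x - pd b (\<lambda>y. e y $ i $ a) x
     + (\<Sum>j\<in>UNIV. \<Gamma> x a $ i $ j * e x $ j $ b - \<Gamma> x b $ i $ j * e x $ j $ a) = 0)"

lemma weyl_connection_torsion_free: "weyl_connection U e \<nu> \<Gamma> \<Longrightarrow> torsion_free U e \<Gamma>"
  unfolding weyl_connection_def torsion_free_def by blast

lemma curv_antisym: "curv \<Gamma> x i j a b = - curv \<Gamma> x i j b a"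
  unfolding curv_def by (simp add: sum_subtractf algebra_simps)

text \<open>The quadratic terms cancel in the trace, so tr Omega = d(tr Gamma), and tr Gamma = 3 nu
  by the Weyl condition.\<close>
lemma trace_curv_weyl:
  assumes U: "open U" "p \<in> U" and W: "weyl_connection U e \<nu> \<Gamma>"
  shows "(\<Sum>i\<in>UNIV. curv \<Gamma> p i i a b) = 3 * (pd a (\<lambda>y. \<nu> y $ b) p - pd b (\<lambda>y. \<nu> y $ a) p)"
proof -
  have "\<Gamma> y c $ i $ i = \<nu> y $ c" if "y \<in> U" for y c i
  proof -
    have "(\<Gamma> y c $ i $ i + \<Gamma> y c $ i $ i) / 2 = kd i i * \<nu> y $ c"
      using W that unfolding weyl_connection_def by blast
    then show ?thesis by (simp add: kd_def)
  qed
  then have diag: "pd d (\<lambda>y. \<Gamma> y c $ i $ i) p = pd d (\<lambda>y. \<nu> y $ c) p" for d c i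
    by (intro pd_cong_open[OF U]) auto
  show ?thesis unfolding curv_def sum_3 diag by algebra
qed

lemma first_bianchi_algebraic:
  fixes e :: "3 \<Rightarrow> 3 \<Rightarrow> real" and dE G :: "3 \<Rightarrow> 3 \<Rightarrow> 3 \<Rightarrow> real"
    and dG ddE :: "3 \<Rightarrow> 3 \<Rightarrow> 3 \<Rightarrow> 3 \<Rightarrow> real"
  assumes T: "\<And>a b i. dE a i b - dE b i a + (\<Sum>j\<in>UNIV. G a i j * e j b - G b i j * e j a) = 0"
    and DT: "\<And>c a b i. ddE c a i b - ddE c b i a + (\<Sum>j\<in>UNIV. dG c a i j * e j b + G a i j * dE c j b
                 - dG c b i j * e j a - G b i j * dE c j a) = 0"
    and SW: "\<And>c a i b. ddE c a i b = ddE a c i b"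
  defines "Om \<equiv> \<lambda>x y i k. dG x y i k - dG y x i k + (\<Sum>j\<in>UNIV. G x i j * G y j k - G y i j * G x j k)"
  shows "(\<Sum>k\<in>UNIV. Om c a i k * e k b) + (\<Sum>k\<in>UNIV. Om a b i k * e k c) + (\<Sum>k\<in>UNIV. Om b c i k * e k a) = 0"
proof -
  define Tx where "Tx a b j = dE a j b - dE b j a + (\<Sum>k\<in>UNIV. G a j k * e k b - G b j k * e k a)" for a b j
  define Dx where "Dx c a b = ddE c a i b - ddE c b i a + (\<Sum>j\<in>UNIV. dG c a i j * e j b + G a i j * dE c j b
                 - dG c b i j * e j a - G b i j * dE c j a)" for c a b
  have "(\<Sum>k\<in>UNIV. Om c a i k * e k b) + (\<Sum>k\<in>UNIV. Om a b i k * e k c) + (\<Sum>k\<in>UNIV. Om b c i k * e k a)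
    = Dx c a b + Dx a b c + Dx b c a
      - (\<Sum>j\<in>UNIV. G a i j * Tx c b j + G b i j * Tx a c j + G c i j * Tx b a j)
      + (ddE a c i b - ddE c a i b) + (ddE b a i c - ddE a b i c) + (ddE c b i a - ddE b c i a)"
    unfolding Om_def Tx_def Dx_def sum_3 by algebra
  moreover have "Tx a b j = 0" for a b j unfolding Tx_def using T .
  moreover have "Dx c a b = 0" for c a b unfolding Dx_def using DT .
  ultimately show ?thesis using SW by simp
qed

lemma torsion_free_pd:
  assumes U: "open U" "p \<in> U"
    and e_smooth: "\<forall>i a. smooth_on U (\<lambda>x. e x $ i $ a)"
    and \<Gamma>_smooth: "\<forall>a i j. smooth_on U (\<lambda>x. \<Gamma> x a $ i $ j)"
    and tf: "torsion_free U e \<Gamma>"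
  shows "pd c (pd a (\<lambda>y. e y $ i $ b)) p - pd c (pd b (\<lambda>y. e y $ i $ a)) p
     + (\<Sum>j\<in>UNIV. pd c (\<lambda>y. \<Gamma> y a $ i $ j) p * e p $ j $ b + \<Gamma> p a $ i $ j * pd c (\<lambda>y. e y $ j $ b) p
        - pd c (\<lambda>y. \<Gamma> y b $ i $ j) p * e p $ j $ a - \<Gamma> p b $ i $ j * pd c (\<lambda>y. e y $ j $ a) p) = 0"
proof -
  have de: "(\<lambda>y. e y $ i $ b) differentiable (at p)" for i b
    using e_smooth smooth_on_differentiable_at U by blast
  have dde: "pd a (\<lambda>y. e y $ i $ b) differentiable (at p)" for a i b
    using e_smooth smooth_on_differentiable_at smooth_on_pd U by blast
  have d\<Gamma>: "(\<lambda>y. \<Gamma> y a $ i $ j) differentiable (at p)" for a i j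
    using \<Gamma>_smooth smooth_on_differentiable_at U by blast
  define T where "T y = (\<Sum>j\<in>UNIV. \<Gamma> y a $ i $ j * e y $ j $ b - \<Gamma> y b $ i $ j * e y $ j $ a)" for y
  have dT: "T differentiable (at p)"
    unfolding T_def using de d\<Gamma> by (auto intro!: differentiable_sum differentiable_diff differentiable_mult)
  have "pd c (\<lambda>y. (pd a (\<lambda>y. e y $ i $ b) y - pd b (\<lambda>y. e y $ i $ a) y) + T y) p = pd c (\<lambda>y. 0) p"
    using tf unfolding torsion_free_def by (intro pd_cong_open[OF U]) (auto simp: T_def)
  then have "0 = pd c (\<lambda>y. pd a (\<lambda>y. e y $ i $ b) y - pd b (\<lambda>y. e y $ i $ a) y) p + pd c T p"
    using pd_add[OF differentiable_diff[OF dde dde] dT] by (simp add: pd_const)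
  also have "pd c (\<lambda>y. pd a (\<lambda>y. e y $ i $ b) y - pd b (\<lambda>y. e y $ i $ a) y) p
      = pd c (pd a (\<lambda>y. e y $ i $ b)) p - pd c (pd b (\<lambda>y. e y $ i $ a)) p"
    using pd_diff[OF dde dde] by simp
  also have "pd c T p = (\<Sum>j\<in>UNIV. pd c (\<lambda>y. \<Gamma> y a $ i $ j * e y $ j $ b - \<Gamma> y b $ i $ j * e y $ j $ a) p)"
    unfolding T_def using de d\<Gamma> by (intro pd_sum) (auto intro!: differentiable_diff differentiable_mult)
  also have "\<dots> = (\<Sum>j\<in>UNIV. pd c (\<lambda>y. \<Gamma> y a $ i $ j) p * e p $ j $ b + \<Gamma> p a $ i $ j * pd c (\<lambda>y. e y $ j $ b) p
      - pd c (\<lambda>y. \<Gamma> y b $ i $ j) p * e p $ j $ a - \<Gamma> p b $ i $ j * pd c (\<lambda>y. e y $ j $ a) p)"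
    using de d\<Gamma> by (intro sum.cong refl) (simp add: pd_diff pd_mult differentiable_mult)
  finally show ?thesis by simp
qed

lemma first_bianchi:
  assumes U: "open U" "p \<in> U"
    and e_smooth: "\<forall>i a. smooth_on U (\<lambda>x. e x $ i $ a)"
    and \<Gamma>_smooth: "\<forall>a i j. smooth_on U (\<lambda>x. \<Gamma> x a $ i $ j)"
    and tf: "torsion_free U e \<Gamma>"
  shows "(\<Sum>k\<in>UNIV. curv \<Gamma> p i k c a * e p $ k $ b) + (\<Sum>k\<in>UNIV. curv \<Gamma> p i k a b * e p $ k $ c)
       + (\<Sum>k\<in>UNIV. curv \<Gamma> p i k b c * e p $ k $ a) = 0"
proof -
  have SW: "pd c (pd a (\<lambda>y. e y $ i $ b)) p = pd a (pd c (\<lambda>y. e y $ i $ b)) p" for c a i b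
    using smooth_on_pd_commute e_smooth U by blast
  have T: "pd a (\<lambda>y. e y $ i $ b) p - pd b (\<lambda>y. e y $ i $ a) p
        + (\<Sum>j\<in>UNIV. \<Gamma> p a $ i $ j * e p $ j $ b - \<Gamma> p b $ i $ j * e p $ j $ a) = 0" for a b i
    using tf U unfolding torsion_free_def by blast
  show ?thesis
    unfolding curv_def
    by (rule first_bianchi_algebraic[where e="\<lambda>j b. e p $ j $ b" and dE="\<lambda>c k b. pd c (\<lambda>y. e y $ k $ b) p"
        and G="\<lambda>a i j. \<Gamma> p a $ i $ j" and dG="\<lambda>c a i j. pd c (\<lambda>y. \<Gamma> y a $ i $ j) p"
        and ddE="\<lambda>c a i b. pd c (pd a (\<lambda>y. e y $ i $ b)) p",
        OF T torsion_free_pd[OF U e_smooth \<Gamma>_smooth tf] SW])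
qed

definition frame_curv_mat :: "(real^3 \<Rightarrow> real^3^3) \<Rightarrow> (real^3 \<Rightarrow> 3 \<Rightarrow> real^3^3) \<Rightarrow> real^3 \<Rightarrow> 3 \<Rightarrow> 3 \<Rightarrow> real^3^3" where
  "frame_curv_mat e \<Gamma> x k l = (\<chi> i j. curvF e \<Gamma> x i j k l)"

lemma frame_curv_mat_eq_sum:
  "frame_curv_mat e \<Gamma> x k l = (\<Sum>a\<in>UNIV. \<Sum>b\<in>UNIV.
      (matrix_inv (e x) $ a $ k * matrix_inv (e x) $ b $ l) *\<^sub>R curv_mat \<Gamma> x a b)"
  by (simp add: frame_curv_mat_def curv_mat_def vec_eq_iff curvF_def sum_component mult_ac)

lemma frame_curv_mat_in_subspace:
  "subspace S \<Longrightarrow> (\<forall>a b. curv_mat \<Gamma> x a b \<in> S) \<Longrightarrow> frame_curv_mat e \<Gamma> x k l \<in> S"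
  unfolding frame_curv_mat_eq_sum by (intro subspace_sum subspace_scale) auto

lemma frame_curv_mat_antisym: "frame_curv_mat e \<Gamma> x k l = - frame_curv_mat e \<Gamma> x l k"
proof -
  have "curvF e \<Gamma> x i j k l = - curvF e \<Gamma> x i j l k" for i j
  proof -
    have "curvF e \<Gamma> x i j k l = (\<Sum>b\<in>UNIV. \<Sum>a\<in>UNIV.
        curv \<Gamma> x i j a b * matrix_inv (e x) $ a $ k * matrix_inv (e x) $ b $ l)"
      unfolding curvF_def by (rule sum.swap)
    also have "\<dots> = (\<Sum>b\<in>UNIV. \<Sum>a\<in>UNIV.
        - (curv \<Gamma> x i j b a * matrix_inv (e x) $ b $ l * matrix_inv (e x) $ a $ k))"
      by (intro sum.cong refl) (subst curv_antisym, simp)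
    finally show ?thesis unfolding curvF_def by (simp add: sum_negf)
  qed
  then show ?thesis by (simp add: frame_curv_mat_def vec_eq_iff)
qed

lemma frame_change_inverse:
  fixes E Ei :: "real^3^3" and W :: "3 \<Rightarrow> 3 \<Rightarrow> real"
  assumes "Ei ** E = mat 1"
  shows "(\<Sum>k\<in>UNIV. \<Sum>l\<in>UNIV. E$k$a * E$l$b * (\<Sum>c\<in>UNIV. \<Sum>d\<in>UNIV. W c d * Ei$c$k * Ei$d$l))
    = W a b"
proof -
  have inv: "(\<Sum>k\<in>UNIV. Ei$c$k * E$k$d) = (if c = d then 1 else 0)" for c d
    using arg_cong[OF assms, of "\<lambda>M. M $ c $ d"] by (simp add: matrix_matrix_mult_def mat_def)
  have "(\<Sum>k\<in>UNIV. \<Sum>l\<in>UNIV. E$k$a * E$l$b * (\<Sum>c\<in>UNIV. \<Sum>d\<in>UNIV. W c d * Ei$c$k * Ei$d$l))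
     = (\<Sum>c\<in>UNIV. \<Sum>d\<in>UNIV. W c d * (\<Sum>k\<in>UNIV. Ei$c$k * E$k$a) * (\<Sum>l\<in>UNIV. Ei$d$l * E$l$b))"
    unfolding sum_3 by algebra
  also have "\<dots> = (\<Sum>c\<in>UNIV. \<Sum>d\<in>UNIV. (if c = a then (if d = b then W c d else 0) else 0))"
    by (intro sum.cong refl) (simp add: inv)
  also have "\<dots> = W a b"
  proof -
    have "(\<Sum>d\<in>UNIV. (if c = a then (if d = b then W c d else 0) else 0)) = (if c = a then W c b else 0)"
      for c by (cases "c = a") simp_all
    then show ?thesis by simp
  qed
  finally show ?thesis .
qed

lemma curv_eq_frame_sum:
  assumes "invertible (e x)"
  shows "curv \<Gamma> x i j a b
    = (\<Sum>k\<in>UNIV. \<Sum>l\<in>UNIV. e x $ k $ a * e x $ l $ b * frame_curv_mat e \<Gamma> x k l $ i $ j)"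
  using frame_change_inverse[OF invertible_matrix_inv(2)[OF assms], of a b "\<lambda>c d. curv \<Gamma> x i j c d"]
  by (simp add: frame_curv_mat_def curvF_def)

section \<open>Einstein-Weyl curvature with reduced holonomy\<close>

text \<open>In dimension 3 a curvature of the form F Id is killed by the first Bianchi identity:
  F \<and> theta^i = 0 for the independent 1-forms theta^i forces the 2-form F to vanish.\<close>
lemma pure_trace_curvature_vanishes:
  assumes U: "open U" "p \<in> U"
    and e_smooth: "\<forall>i a. smooth_on U (\<lambda>x. e x $ i $ a)"
    and \<Gamma>_smooth: "\<forall>a i j. smooth_on U (\<lambda>x. \<Gamma> x a $ i $ j)"
    and tf: "torsion_free U e \<Gamma>" and e_inv: "invertible (e p)"
    and F: "\<And>i j a b. curv \<Gamma> p i j a b = F a b * kd i j"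
  shows "F a b = 0"
proof -
  have kd_sum: "(\<Sum>k\<in>UNIV. F c d * kd i k * e p $ k $ z) = F c d * e p $ i $ z" for c d i z
    by (simp add: kd_def if_distrib if_distribR cong: if_cong)
  have "F 3 1 * e p $ i $ 2 + F 1 2 * e p $ i $ 3 + F 2 3 * e p $ i $ 1 = 0" for i
    using first_bianchi[OF U e_smooth \<Gamma>_smooth tf, of i 3 1 2] unfolding F kd_sum .
  moreover define v :: "real^3" where "v = vector [F 2 3, F 3 1, F 1 2]"
  ultimately have "e p *v v = 0"
    by (simp add: v_def vec_eq_iff matrix_vector_mult_def sum_3 algebra_simps)
  then have "v = 0"
    using invertible_matrix_inv(2)[OF e_inv]
    by (metis matrix_vector_mul_assoc matrix_vector_mul_lid matrix_vector_mult_0_right)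
  then have F0: "F 2 3 = 0" "F 3 1 = 0" "F 1 2 = 0"
    unfolding v_def by (simp_all add: vec_eq_iff forall_3)
  have F_curv: "F c d = curv \<Gamma> p 1 1 c d" for c d using F[of 1 1 c d] by (simp add: kd_def)
  have F_antisym: "F c d = - F d c" for c d unfolding F_curv by (rule curv_antisym)
  have F_diag: "F c c = 0" for c using F_antisym[of c c] by simp
  show ?thesis
    using exhaust_3[of a] exhaust_3[of b] F0 F_diag F_antisym[of 3 2] F_antisym[of 1 3] F_antisym[of 2 1]
    by auto
qed

text \<open>Write the o(3)-parts of Phi_23, Phi_31, Phi_12 as the columns of a matrix W. The
  Einstein-Weyl equations say that W is t Id plus a skew matrix, commutation makes the columns
  parallel, and the resulting sums of squares force t = 0 and the skew part to vanish.\<close>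
lemma einstein_weyl_commuting_curvature_scalar:
  fixes \<Phi> :: "3 \<Rightarrow> 3 \<Rightarrow> real^3^3"
  assumes antisym: "\<And>k l. \<Phi> k l = - \<Phi> l k"
    and co: "\<And>k l. \<Phi> k l \<in> co3"
    and ew: "\<And>i j. ((\<Sum>k\<in>UNIV. \<Phi> k j $ k $ i) + (\<Sum>k\<in>UNIV. \<Phi> k i $ k $ j)) / 2
                - (\<Sum>i'\<in>UNIV. \<Sum>k\<in>UNIV. \<Phi> k i' $ k $ i') / 3 * kd i j = 0"
    and comm: "\<And>k l m n. \<Phi> k l ** \<Phi> m n = \<Phi> m n ** \<Phi> k l"
  shows "\<Phi> k l $ i $ j = \<Phi> k l $ 1 $ 1 * kd i j"
proof -
  have diag0: "\<Phi> k k = 0" for k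
  proof -
    have "\<Phi> k k $ i $ j = - (\<Phi> k k $ i $ j)" for i j
      using arg_cong[OF antisym[of k k], of "\<lambda>M. M $ i $ j"] by simp
    then show ?thesis by (simp add: vec_eq_iff)
  qed
  have flip: "\<Phi> 3 2 = - \<Phi> 2 3" "\<Phi> 1 3 = - \<Phi> 3 1" "\<Phi> 2 1 = - \<Phi> 1 2" by (rule antisym)+
  note c1 = co3_entries[OF co[of 2 3]] and c2 = co3_entries[OF co[of 3 1]]
    and c3 = co3_entries[OF co[of 1 2]]
  note simps = diag0 flip c1 c2 c3 sum_3 kd_def
  have L: "2 * \<Phi> 3 1 $ 1 $ 3 + (2 * \<Phi> 1 2 $ 2 $ 1 - 4 * \<Phi> 2 3 $ 3 $ 2) = 0"
      "2 * \<Phi> 2 3 $ 3 $ 2 + (2 * \<Phi> 1 2 $ 2 $ 1 - 4 * \<Phi> 3 1 $ 1 $ 3) = 0"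
      "\<Phi> 3 1 $ 3 $ 2 + \<Phi> 2 3 $ 1 $ 3 = 0" "\<Phi> 1 2 $ 3 $ 2 + \<Phi> 2 3 $ 2 $ 1 = 0"
      "\<Phi> 1 2 $ 1 $ 3 + \<Phi> 3 1 $ 2 $ 1 = 0"
    using ew[of 1 1] ew[of 2 2] ew[of 3 3] ew[of 1 2] ew[of 1 3] ew[of 2 3] by (simp_all add: simps)
  have Q: "\<Phi> 2 3 $ 3 $ 2 * \<Phi> 3 1 $ 1 $ 3 = \<Phi> 3 1 $ 3 $ 2 * \<Phi> 2 3 $ 1 $ 3"
     "\<Phi> 3 1 $ 1 $ 3 * \<Phi> 1 2 $ 2 $ 1 = \<Phi> 1 2 $ 1 $ 3 * \<Phi> 3 1 $ 2 $ 1"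
     "\<Phi> 1 2 $ 2 $ 1 * \<Phi> 2 3 $ 3 $ 2 = \<Phi> 2 3 $ 2 $ 1 * \<Phi> 1 2 $ 3 $ 2"
    using arg_cong[OF comm[of 2 3 3 1], of "\<lambda>M. M $ 2 $ 1"]
     arg_cong[OF comm[of 3 1 1 2], of "\<lambda>M. M $ 3 $ 2"]
     arg_cong[OF comm[of 1 2 2 3], of "\<lambda>M. M $ 1 $ 3"]
    by (simp_all add: simps matrix_matrix_mult_def)
  define t where "t = \<Phi> 2 3 $ 3 $ 2"
  have T: "\<Phi> 3 1 $ 1 $ 3 = t" "\<Phi> 1 2 $ 2 $ 1 = t" using L unfolding t_def by linarith+
  have O: "\<Phi> 3 1 $ 3 $ 2 = - \<Phi> 2 3 $ 1 $ 3" "\<Phi> 1 2 $ 3 $ 2 = - \<Phi> 2 3 $ 2 $ 1"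
    "\<Phi> 1 2 $ 1 $ 3 = - \<Phi> 3 1 $ 2 $ 1" using L by linarith+
  have "t^2 + (\<Phi> 2 3 $ 1 $ 3)^2 = 0" "t^2 + (\<Phi> 3 1 $ 2 $ 1)^2 = 0" "t^2 + (\<Phi> 2 3 $ 2 $ 1)^2 = 0"
    using Q T O unfolding t_def by (simp_all add: power2_eq_square)
  then have "t = 0" "\<Phi> 2 3 $ 1 $ 3 = 0" "\<Phi> 3 1 $ 2 $ 1 = 0" "\<Phi> 2 3 $ 2 $ 1 = 0"
    using sum_power2_eq_zero_iff by blast+
  then have Z: "\<Phi> 2 3 $ 3 $ 2 = 0" "\<Phi> 2 3 $ 1 $ 3 = 0" "\<Phi> 2 3 $ 2 $ 1 = 0"
    "\<Phi> 3 1 $ 3 $ 2 = 0" "\<Phi> 3 1 $ 1 $ 3 = 0" "\<Phi> 3 1 $ 2 $ 1 = 0"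
    "\<Phi> 1 2 $ 3 $ 2 = 0" "\<Phi> 1 2 $ 1 $ 3 = 0" "\<Phi> 1 2 $ 2 $ 1 = 0"
    using T O unfolding t_def by simp_all
  have "\<Phi> k l $ i $ j = 0 \<or> i = j"
    using exhaust_3[of k] exhaust_3[of l] exhaust_3[of i] exhaust_3[of j] by (auto simp: simps Z)
  moreover have "\<Phi> k l $ i $ i = \<Phi> k l $ 1 $ 1"
    using exhaust_3[of i] co3_entries[OF co[of k l]] by auto
  ultimately show ?thesis by (auto simp: kd_def)
qed

lemma curvature_trace_vanishes:
  assumes U: "open U" "p \<in> U"
    and e_smooth: "\<forall>i a. smooth_on U (\<lambda>x. e x $ i $ a)"
    and \<Gamma>_smooth: "\<forall>a i j. smooth_on U (\<lambda>x. \<Gamma> x a $ i $ j)"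
    and tf: "torsion_free U e \<Gamma>" and e_inv: "invertible (e p)"
    and ew: "einstein_weyl U e \<Gamma>"
    and S: "proper_co3_subalgebra S" and curv_S: "\<forall>a b. curv_mat \<Gamma> p a b \<in> S"
  shows "(\<Sum>i\<in>UNIV. curv \<Gamma> p i i a b) = 0"
proof -
  define \<Phi> where "\<Phi> = frame_curv_mat e \<Gamma> p"
  have \<Phi>_S: "\<Phi> k l \<in> S" for k l
    using S curv_S frame_curv_mat_in_subspace
    unfolding \<Phi>_def proper_co3_subalgebra_def lie_subalgebra_def by blast
  then have \<Phi>_co3: "\<Phi> k l \<in> co3" for k l using S unfolding proper_co3_subalgebra_def by blast
  have curv_\<Phi>: "curv \<Gamma> p i j a b
      = (\<Sum>k\<in>UNIV. \<Sum>l\<in>UNIV. e p $ k $ a * e p $ l $ b * \<Phi> k l $ i $ j)" for i j a b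
    unfolding \<Phi>_def by (rule curv_eq_frame_sum[of e p, OF e_inv])
  show ?thesis
  proof (cases "\<exists>k l. \<Phi> k l $ 1 $ 1 \<noteq> 0")
    case False
    then have "\<Phi> k l $ i $ i = 0" for k l i
      using exhaust_3[of i] co3_entries[OF \<Phi>_co3[of k l]] by auto
    then show ?thesis unfolding curv_\<Phi> by simp
  next
    case True
    then obtain k0 l0 where "\<Phi> k0 l0 $ 1 $ 1 \<noteq> 0" by blast
    then have comm: "\<Phi> k l ** \<Phi> m n = \<Phi> m n ** \<Phi> k l" for k l m n
      using proper_co3_subalgebra_commute[OF S \<Phi>_S] \<Phi>_S by blast
    have ew_\<Phi>: "((\<Sum>k\<in>UNIV. \<Phi> k j $ k $ i) + (\<Sum>k\<in>UNIV. \<Phi> k i $ k $ j)) / 2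
        - (\<Sum>i'\<in>UNIV. \<Sum>k\<in>UNIV. \<Phi> k i' $ k $ i') / 3 * kd i j = 0" for i j
      using ew U unfolding einstein_weyl_def ricci_def scal_def \<Phi>_def frame_curv_mat_def by simp
    have \<Phi>_antisym: "\<Phi> k l = - \<Phi> l k" for k l
      unfolding \<Phi>_def by (rule frame_curv_mat_antisym)
    note \<Phi>_scalar = einstein_weyl_commuting_curvature_scalar[OF \<Phi>_antisym \<Phi>_co3 ew_\<Phi> comm]
    define F where "F a b = (\<Sum>k\<in>UNIV. \<Sum>l\<in>UNIV. e p $ k $ a * e p $ l $ b * \<Phi> k l $ 1 $ 1)" for a b
    have "curv \<Gamma> p i j a b = F a b * kd i j" for i j a b
    proof -
      have "curv \<Gamma> p i j a b
          = (\<Sum>k\<in>UNIV. \<Sum>l\<in>UNIV. e p $ k $ a * e p $ l $ b * (\<Phi> k l $ 1 $ 1 * kd i j))"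
        unfolding curv_\<Phi> by (intro sum.cong refl) (subst \<Phi>_scalar, rule refl)
      then show ?thesis unfolding F_def by (simp add: sum_distrib_left sum_distrib_right mult_ac)
    qed
    then show ?thesis
      using pure_trace_curvature_vanishes[OF U e_smooth \<Gamma>_smooth tf e_inv, of F] by simp
  qed
qed

theorem proposition1:
  fixes U :: "(real^3) set"
    and e :: "real^3 \<Rightarrow> real^3^3"
    and \<nu> :: "real^3 \<Rightarrow> real^3"
    and \<Gamma> :: "real^3 \<Rightarrow> 3 \<Rightarrow> real^3^3"
  assumes "open U"
    and "\<forall>i a. smooth_on U (\<lambda>x. e x $ i $ a)"
    and "\<forall>x\<in>U. det (e x) \<noteq> 0"
    and "\<forall>a. smooth_on U (\<lambda>x. \<nu> x $ a)"
    and "\<forall>a i j. smooth_on U (\<lambda>x. \<Gamma> x a $ i $ j)"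
    and "weyl_connection U e \<nu> \<Gamma>"
    and "\<forall>x\<in>U. dform_nonzero_at \<nu> x"
    and "einstein_weyl U e \<Gamma>"
    and "reduced_holonomy U \<Gamma>"
  shows "flat_on U \<Gamma>"
proof -
  have False if p: "p \<in> U" for p
  proof -
    obtain V where V: "open V" "p \<in> V" "V \<subseteq> U" "reduced_on V \<Gamma>"
      using assms(9) p unfolding reduced_holonomy_def by blast
    have \<Gamma>_V: "\<forall>a i j. smooth_on V (\<lambda>x. \<Gamma> x a $ i $ j)"
      using assms(5) V(3) smooth_on_subset by blast
    obtain S where S: "proper_co3_subalgebra S" "\<forall>a b. curv_mat \<Gamma> p a b \<in> S"
      using reduced_on_curvature_in_proper_subalgebra[OF V(1,2) \<Gamma>_V V(4)] by blast
    have e_inv: "invertible (e p)" using assms(3) p invertible_det_nz by blast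
    have "(\<Sum>i\<in>UNIV. curv \<Gamma> p i i a b) = 0" for a b
      by (rule curvature_trace_vanishes[OF assms(1) p assms(2,5)
            weyl_connection_torsion_free[OF assms(6)] e_inv assms(8) S])
    then have "pd a (\<lambda>y. \<nu> y $ b) p - pd b (\<lambda>y. \<nu> y $ a) p = 0" for a b
      using trace_curv_weyl[OF assms(1) p assms(6)] by simp
    then show False using assms(7) p unfolding dform_nonzero_at_def by blast
  qed
  then show ?thesis unfolding flat_on_def by blast
qed

end
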